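(* For any Boolean function $f:\{0,1\}^n\to\{0,1\}$, $\mathsf{KI}(f)\le\mathrm{depth}(f)$.
   Context: Fix a universal prefix-free Turing machine and let $K(a\mid b)$ denote the prefix-free Kolmogorov complexity of $a$ given $b$. For $f:S\to\{0,1\}$, $S\subseteq\Sigma^n$, $$\mathsf{KI}(f)=\min_{\alpha\in\Sigma^*}\ \max_{x,y:\ f(x)\neq f(y)}\ \min_{i:\ x_i\neq y_i}\big(K(i\mid x,\alpha)+K(i\mid y,\alpha)\big).$$ $\mathrm{depth}(f)$ is the minimum depth of a formula (binary tree with internal nodes labeled $\wedge,\vee$ and leaves labeled by literals $x_i,\neg x_i$) computing $f$. *)

theory Defs
  imports Main "HOL-Library.Sublist"
begin

datatype recf = Zero | Succ | Proj nat | Comp recf "recf list" | PrimRec recf recf | Mu recf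

inductive reval :: "recf \<Rightarrow> nat list \<Rightarrow> nat \<Rightarrow> bool" where
  zero: "reval Zero xs 0"
| succ: "reval Succ (x # xs) (Suc x)"
| proj: "i < length xs \<Longrightarrow> reval (Proj i) xs (xs ! i)"
| comp: "list_all2 (\<lambda>g y. reval g xs y) gs ys \<Longrightarrow> reval f ys z \<Longrightarrow> reval (Comp f gs) xs z"
| prim0: "reval g xs y \<Longrightarrow> reval (PrimRec g h) (0 # xs) y"
| primS: "reval (PrimRec g h) (n # xs) y \<Longrightarrow> reval h (y # n # xs) z
           \<Longrightarrow> reval (PrimRec g h) (Suc n # xs) z"
| mu: "reval f (n # xs) 0 \<Longrightarrow> (\<forall>m<n. \<exists>v. reval f (m # xs) (Suc v)) \<Longrightarrow> reval (Mu f) xs n"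

definition comp2 :: "(nat \<Rightarrow> nat \<Rightarrow> nat option) \<Rightarrow> bool" where
  "comp2 g \<longleftrightarrow> (\<exists>r. \<forall>a b v. reval r [a, b] v \<longleftrightarrow> g a b = Some v)"

fun nat_of_bl :: "bool list \<Rightarrow> nat" where
  "nat_of_bl [] = 0"
| "nat_of_bl (b # bs) = 2 * nat_of_bl bs + (if b then 2 else 1)"

fun bl_of_nat :: "nat \<Rightarrow> bool list" where
  "bl_of_nat 0 = []"
| "bl_of_nat (Suc n) = (odd n) # bl_of_nat (n div 2)"

text \<open>A machine maps (program, condition) to an optional output string.\<close>
type_synonym machine = "bool list \<Rightarrow> bool list \<Rightarrow> bool list option"

definition computable_machine :: "machine \<Rightarrow> bool" where
  "computable_machine M \<longleftrightarrow>
     comp2 (\<lambda>a b. map_option nat_of_bl (M (bl_of_nat a) (bl_of_nat b)))"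

definition prefix_free_machine :: "machine \<Rightarrow> bool" where
  "prefix_free_machine M \<longleftrightarrow> computable_machine M \<and>
     (\<forall>y p q. M p y \<noteq> None \<longrightarrow> M q y \<noteq> None \<longrightarrow> prefix p q \<longrightarrow> p = q)"

definition universal_pf :: "machine \<Rightarrow> bool" where
  "universal_pf U \<longleftrightarrow> prefix_free_machine U \<and>
     (\<forall>M. prefix_free_machine M \<longrightarrow> (\<exists>\<sigma>. \<forall>p y. U (\<sigma> @ p) y = M p y))"

definition KC :: "machine \<Rightarrow> bool list \<Rightarrow> bool list \<Rightarrow> nat" where
  "KC U a b = Inf (length ` {p. U p b = Some a})"

text \<open>Self-delimiting encoding of a pair of strings (used for conditions (x, alpha)).\<close>
definition pair_bl :: "bool list \<Rightarrow> bool list \<Rightarrow> bool list" where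
  "pair_bl x a = concat (map (\<lambda>b. [b, b]) x) @ [False, True] @ a"

text \<open>Inputs are bool lists of length n; coordinates are indexed 1..n; an index i is
  given to the machine as the string bl_of_nat i.\<close>
definition KI :: "machine \<Rightarrow> nat \<Rightarrow> (bool list \<Rightarrow> bool) \<Rightarrow> nat" where
  "KI U n f = (INF \<alpha>. SUP xy \<in> {(x, y). length x = n \<and> length y = n \<and> f x \<noteq> f y}.
      INF i \<in> {i. 1 \<le> i \<and> i \<le> n \<and> fst xy ! (i - 1) \<noteq> snd xy ! (i - 1)}.
        KC U (bl_of_nat i) (pair_bl (fst xy) \<alpha>) + KC U (bl_of_nat i) (pair_bl (snd xy) \<alpha>))"

datatype form = Lit nat bool | And form form | Or form form

fun feval :: "form \<Rightarrow> bool list \<Rightarrow> bool" where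
  "feval (Lit i b) x = (if b then x ! (i - 1) else \<not> x ! (i - 1))"
| "feval (And a b) x = (feval a x \<and> feval b x)"
| "feval (Or a b) x = (feval a x \<or> feval b x)"

fun fvars :: "form \<Rightarrow> nat set" where
  "fvars (Lit i b) = {i}"
| "fvars (And a b) = fvars a \<union> fvars b"
| "fvars (Or a b) = fvars a \<union> fvars b"

fun fdepth :: "form \<Rightarrow> nat" where
  "fdepth (Lit i b) = 0"
| "fdepth (And a b) = Suc (max (fdepth a) (fdepth b))"
| "fdepth (Or a b) = Suc (max (fdepth a) (fdepth b))"

definition computes :: "nat \<Rightarrow> form \<Rightarrow> (bool list \<Rightarrow> bool) \<Rightarrow> bool" where
  "computes n \<phi> f \<longleftrightarrow> fvars \<phi> \<subseteq> {1..n} \<and> (\<forall>x. length x = n \<longrightarrow> feval \<phi> x = f x)"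

definition depth :: "nat \<Rightarrow> (bool list \<Rightarrow> bool) \<Rightarrow> nat" where
  "depth n f = Inf (fdepth ` {\<phi>. computes n \<phi> f})"

end

theory Submission
  imports Defs "HOL-Library.Nat_Bijection"
begin

text \<open>
  Fix a formula \<phi> of minimal depth computing f, and inputs x, y with f x and \<not> f y. In the
  Karchmer--Wigderson game on \<phi> the holder of x moves to a true child at every Or gate and the
  holder of y to a false child at every And gate; the walk from the root ends at a literal on a
  coordinate i with x_i \<noteq> y_i. Given x, the leaf is determined by the string p of choices made by
  the other player, and given y by the string q of choices of the first one, where
  |p| + |q| \<le> depth \<phi>. For fixed x the strings p leading to a leaf form a prefix-free set. Taking
  as advice \<alpha> the finite table of all these walks, one fixed prefix-free machine looks p up in
  the table attached to the condition (x, \<alpha>), so that K(i | x, \<alpha>) + K(i | y, \<alpha>) \<le> |p| + |q| + 2c,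
  where c is the length of the prefix by which the universal machine simulates it. If no formula
  computes f, then f is constant on inputs of length n and KI f = 0.
\<close>

section \<open>Total recursive functions\<close>

inductive_cases reval_ZeroE: "reval Zero xs v"
inductive_cases reval_SuccE: "reval Succ xs v"
inductive_cases reval_ProjE: "reval (Proj i) xs v"
inductive_cases reval_CompE: "reval (Comp f gs) xs v"
inductive_cases reval_PrimRecE: "reval (PrimRec g h) xs v"
inductive_cases reval_MuE: "reval (Mu f) xs v"

lemma list_all2_deterministic:
  "list_all2 (\<lambda>g y. P g y \<and> (\<forall>w. Q g w \<longrightarrow> y = w)) gs ys \<Longrightarrow> list_all2 Q gs ys' \<Longrightarrow> ys = ys'"
  by (induction gs arbitrary: ys ys') (auto simp: list_all2_Cons1)

lemma reval_deterministic: "reval r xs v \<Longrightarrow> reval r xs w \<Longrightarrow> v = w"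
proof (induction r xs v arbitrary: w rule: reval.induct)
  case (comp xs gs ys f z)
  from comp.prems obtain ys' where "list_all2 (\<lambda>g y. reval g xs y) gs ys'" "reval f ys' w"
    by (auto elim: reval_CompE)
  moreover from comp.IH(1) this(1) have "ys = ys'"
    by (rule list_all2_deterministic)
  ultimately show ?case
    using comp.IH(2) by simp
next
  case (mu f n xs)
  from mu.prems have w: "reval f (w # xs) 0" "\<forall>m<w. \<exists>v. reval f (m # xs) (Suc v)"
    by (auto elim: reval_MuE)
  show ?case
  proof (rule linorder_cases)
    assume "n < w"
    with w mu.IH(1) show ?thesis by force
  next
    assume "w < n"
    with w mu.IH(2) show ?thesis by force
  qed
next
  case (prim0 g xs y h)
  from prim0.prems show ?case
    by (rule reval_PrimRecE) (use prim0.IH in auto)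
next
  case (primS g h n xs y z)
  from primS.prems show ?case
    by (rule reval_PrimRecE) (use primS.IH in auto)
next
  case (zero xs) then show ?case by (auto elim: reval_ZeroE)
next
  case (succ x xs) then show ?case by (auto elim: reval_SuccE)
next
  case (proj i xs) then show ?case by (auto elim: reval_ProjE)
qed

definition total_rec :: "nat \<Rightarrow> (nat list \<Rightarrow> nat) \<Rightarrow> bool" where
  "total_rec k f \<longleftrightarrow> (\<exists>r. \<forall>xs. length xs = k \<longrightarrow> reval r xs (f xs))"

lemma total_rec_cong:
  "total_rec k f \<Longrightarrow> (\<And>xs. length xs = k \<Longrightarrow> f xs = g xs) \<Longrightarrow> total_rec k g"
  unfolding total_rec_def by metis

lemma total_rec_proj: "i < k \<Longrightarrow> total_rec k (\<lambda>xs. xs ! i)"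
  unfolding total_rec_def by (metis reval.proj)

lemma total_rec_zero: "total_rec k (\<lambda>xs. 0)"
  unfolding total_rec_def by (metis reval.zero)

lemma total_rec_Suc: "total_rec k f \<Longrightarrow> total_rec k (\<lambda>xs. Suc (f xs))"
  unfolding total_rec_def by (metis list_all2_Cons list_all2_Nil reval.comp reval.succ)

lemma total_rec_const: "total_rec k (\<lambda>xs. c)"
  by (induction c) (auto intro: total_rec_zero total_rec_Suc)

lemma total_rec_comp:
  assumes h: "total_rec (length fs) h" and fs: "\<forall>f\<in>set fs. total_rec k f"
  shows "total_rec k (\<lambda>xs. h (map (\<lambda>f. f xs) fs))"
proof -
  from fs have "\<exists>rs. \<forall>xs. length xs = k \<longrightarrow> list_all2 (\<lambda>g y. reval g xs y) rs (map (\<lambda>f. f xs) fs)"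
  proof (induction fs)
    case (Cons f fs)
    then obtain r rs where "\<forall>xs. length xs = k \<longrightarrow> reval r xs (f xs)"
      "\<forall>xs. length xs = k \<longrightarrow> list_all2 (\<lambda>g y. reval g xs y) rs (map (\<lambda>f. f xs) fs)"
      unfolding total_rec_def by auto
    then show ?case by (intro exI[of _ "r # rs"]) auto
  qed simp
  with h show ?thesis
    unfolding total_rec_def by (metis length_map reval.comp)
qed

lemma total_rec_comp1:
  "total_rec 1 (\<lambda>xs. h (xs ! 0)) \<Longrightarrow> total_rec k f \<Longrightarrow> total_rec k (\<lambda>xs. h (f xs))"
  using total_rec_comp[of "[f]" "\<lambda>xs. h (xs ! 0)" k] by simp

lemma total_rec_comp2:
  "total_rec 2 (\<lambda>xs. h (xs ! 0) (xs ! 1)) \<Longrightarrow> total_rec k f \<Longrightarrow> total_rec k g \<Longrightarrow>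
    total_rec k (\<lambda>xs. h (f xs) (g xs))"
  using total_rec_comp[of "[f, g]" "\<lambda>xs. h (xs ! 0) (xs ! 1)" k] by (simp add: numeral_2_eq_2)

lemma total_rec_prim_rec:
  assumes g: "total_rec k g" and h: "total_rec (Suc (Suc k)) h"
    and F0: "\<And>xs. length xs = k \<Longrightarrow> F (0 # xs) = g xs"
    and FSuc: "\<And>n xs. length xs = k \<Longrightarrow> F (Suc n # xs) = h (F (n # xs) # n # xs)"
  shows "total_rec (Suc k) F"
proof -
  obtain rg rh where rg: "\<forall>xs. length xs = k \<longrightarrow> reval rg xs (g xs)"
    and rh: "\<forall>xs. length xs = Suc (Suc k) \<longrightarrow> reval rh xs (h xs)"
    using g h unfolding total_rec_def by blast
  have "reval (PrimRec rg rh) (n # xs) (F (n # xs))" if "length xs = k" for n xs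
  proof (induction n)
    case 0
    then show ?case using rg F0 that by (auto intro: reval.prim0)
  next
    case (Suc n)
    then show ?case using rh FSuc that by (auto intro: reval.primS)
  qed
  then show ?thesis
    unfolding total_rec_def by (metis length_Suc_conv)
qed

lemma reval_Mu_iff:
  assumes "\<forall>xs. length xs = Suc k \<longrightarrow> reval r xs (f xs)" and "length xs = k"
  shows "reval (Mu r) xs v \<longleftrightarrow> f (v # xs) = 0 \<and> (\<forall>m<v. f (m # xs) \<noteq> 0)"
proof -
  have r: "reval r (m # xs) w \<longleftrightarrow> w = f (m # xs)" for m w
    using assms reval_deterministic by auto
  have "reval (Mu r) xs v \<longleftrightarrow> reval r (v # xs) 0 \<and> (\<forall>m<v. \<exists>w. reval r (m # xs) (Suc w))"
    by (blast intro: reval.mu elim: reval_MuE)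
  also have "\<dots> \<longleftrightarrow> f (v # xs) = 0 \<and> (\<forall>m<v. f (m # xs) \<noteq> 0)"
    by (simp add: r) (metis gr0_conv_Suc)
  finally show ?thesis .
qed

lemma total_rec_tl: "total_rec k f \<Longrightarrow> total_rec (Suc k) (\<lambda>xs. f (tl xs))"
proof -
  assume f: "total_rec k f"
  have "total_rec (Suc k) (\<lambda>xs. f (map (\<lambda>g. g xs) (map (\<lambda>i xs. xs ! Suc i) [0..<k])))"
    by (rule total_rec_comp) (auto simp: f intro: total_rec_proj)
  then show ?thesis
  proof (rule total_rec_cong)
    fix xs :: "nat list"
    assume "length xs = Suc k"
    then show "f (map (\<lambda>g. g xs) (map (\<lambda>i xs. xs ! Suc i) [0..<k])) = f (tl xs)"
      by (cases xs) (auto intro!: arg_cong[where f = f] nth_equalityI)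
  qed
qed

lemma total_rec_add:
  assumes "total_rec k f" and "total_rec k g"
  shows "total_rec k (\<lambda>xs. f xs + g xs)"
proof -
  have "total_rec (Suc 1) (\<lambda>xs. xs ! 0 + xs ! 1)"
    by (rule total_rec_prim_rec[where g = "\<lambda>xs. xs ! 0" and h = "\<lambda>zs. Suc (zs ! 0)"])
      (auto intro: total_rec_proj total_rec_Suc)
  then show ?thesis
    using total_rec_comp2[of "(+)", OF _ assms] by (simp add: numeral_2_eq_2)
qed

lemma total_rec_mult:
  assumes "total_rec k f" and "total_rec k g"
  shows "total_rec k (\<lambda>xs. f xs * g xs)"
proof -
  have "total_rec (Suc 1) (\<lambda>xs. xs ! 0 * xs ! 1)"
    by (rule total_rec_prim_rec[where g = "\<lambda>xs. 0" and h = "\<lambda>zs. zs ! 2 + zs ! 0"])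
      (auto intro!: total_rec_add total_rec_proj total_rec_zero)
  then show ?thesis
    using total_rec_comp2[of "(*)", OF _ assms] by (simp add: numeral_2_eq_2)
qed

lemma total_rec_minus_1: "total_rec k f \<Longrightarrow> total_rec k (\<lambda>xs. f xs - 1)"
proof -
  have "total_rec (Suc 0) (\<lambda>xs. xs ! 0 - 1)"
    by (rule total_rec_prim_rec[where g = "\<lambda>xs. 0" and h = "\<lambda>zs. zs ! 1"])
      (auto intro: total_rec_proj total_rec_zero)
  then show "total_rec k f \<Longrightarrow> total_rec k (\<lambda>xs. f xs - 1)"
    using total_rec_comp1[of "\<lambda>n. n - 1"] by simp
qed

lemma total_rec_diff:
  assumes "total_rec k f" and "total_rec k g"
  shows "total_rec k (\<lambda>xs. f xs - g xs)"
proof -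
  have pred: "total_rec (Suc (Suc 1)) (\<lambda>zs. zs ! 0 - 1)"
    by (rule total_rec_minus_1[OF total_rec_proj]) simp
  have "total_rec (Suc 1) (\<lambda>xs. xs ! 1 - xs ! 0)"
    by (rule total_rec_prim_rec[where g = "\<lambda>xs. xs ! 0", OF _ pred]) (auto intro: total_rec_proj)
  then show ?thesis
    using total_rec_comp2[of "\<lambda>a b. b - a", OF _ assms(2,1)] by (simp add: numeral_2_eq_2)
qed

definition rec_pred :: "nat \<Rightarrow> (nat list \<Rightarrow> bool) \<Rightarrow> bool" where
  "rec_pred k P \<longleftrightarrow> total_rec k (\<lambda>xs. of_bool (P xs))"

lemma rec_pred_eq: "total_rec k f \<Longrightarrow> total_rec k g \<Longrightarrow> rec_pred k (\<lambda>xs. f xs = g xs)"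
  unfolding rec_pred_def
  by (rule total_rec_cong[where f = "\<lambda>xs. 1 - ((f xs - g xs) + (g xs - f xs))"])
    (auto intro!: total_rec_diff total_rec_add total_rec_const)

lemma rec_pred_less: "total_rec k f \<Longrightarrow> total_rec k g \<Longrightarrow> rec_pred k (\<lambda>xs. f xs < g xs)"
  unfolding rec_pred_def
  by (rule total_rec_cong[where f = "\<lambda>xs. 1 - (1 - (g xs - f xs))"])
    (auto intro!: total_rec_diff total_rec_const)

lemma rec_pred_not: "rec_pred k P \<Longrightarrow> rec_pred k (\<lambda>xs. \<not> P xs)"
  unfolding rec_pred_def
  by (rule total_rec_cong[where f = "\<lambda>xs. 1 - of_bool (P xs)"])
    (auto intro!: total_rec_diff total_rec_const)

lemma rec_pred_conj: "rec_pred k P \<Longrightarrow> rec_pred k Q \<Longrightarrow> rec_pred k (\<lambda>xs. P xs \<and> Q xs)"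
  unfolding rec_pred_def
  by (rule total_rec_cong[where f = "\<lambda>xs. of_bool (P xs) * of_bool (Q xs)"])
    (auto intro!: total_rec_mult)

lemma rec_pred_imp: "rec_pred k P \<Longrightarrow> rec_pred k Q \<Longrightarrow> rec_pred k (\<lambda>xs. P xs \<longrightarrow> Q xs)"
  using rec_pred_not[OF rec_pred_conj[OF _ rec_pred_not]] by simp

lemma total_rec_Least:
  assumes P: "rec_pred (Suc k) P" and ex: "\<And>xs. length xs = k \<Longrightarrow> \<exists>n. P (n # xs)"
  shows "total_rec k (\<lambda>xs. LEAST n. P (n # xs))"
proof -
  obtain r where r: "\<forall>xs. length xs = Suc k \<longrightarrow> reval r xs (of_bool (\<not> P xs))"
    using rec_pred_not[OF P] unfolding rec_pred_def total_rec_def by blast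
  have "reval (Mu r) xs (LEAST n. P (n # xs))" if "length xs = k" for xs
    using reval_Mu_iff[OF r that] LeastI_ex[OF ex[OF that]] by (auto dest: not_less_Least)
  then show ?thesis
    unfolding total_rec_def by blast
qed

lemma total_rec_div:
  assumes "total_rec k f" and "total_rec k g"
  shows "total_rec k (\<lambda>xs. f xs div g xs)"
proof -
  \<comment> \<open>a div (d + 1) is found by unbounded search; the factor of_bool (0 < g) gives a div 0 = 0\<close>
  define P where "P zs \<longleftrightarrow> zs ! 1 < Suc (zs ! 2) * Suc (zs ! 0)" for zs
  have "rec_pred (Suc 2) P"
    unfolding P_def by (intro rec_pred_less total_rec_mult total_rec_Suc total_rec_proj) auto
  moreover have "\<exists>q. P (q # xs)" for xs
    by (auto simp: P_def intro!: exI[of _ "xs ! 0"])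
  ultimately have "total_rec 2 (\<lambda>xs. LEAST q. P (q # xs))"
    by (rule total_rec_Least)
  moreover have "(LEAST q. a < Suc d * Suc q) = a div Suc d" for a d
  proof -
    have "a < Suc d * Suc q \<longleftrightarrow> a div Suc d \<le> q" for q
      using div_less_iff_less_mult[of "Suc d" a "Suc q"] by (simp only: mult.commute less_Suc_eq_le)
    then show ?thesis
      by (simp add: Least_equality)
  qed
  ultimately have "total_rec 2 (\<lambda>xs. xs ! 0 div Suc (xs ! 1))"
    by (simp add: P_def)
  then have "total_rec k (\<lambda>xs. f xs div Suc (g xs - 1))"
    using total_rec_comp2[of "\<lambda>a d. a div Suc d", OF _ assms(1) total_rec_minus_1[OF assms(2)]] by simp
  moreover have "total_rec k (\<lambda>xs. of_bool (0 < g xs))"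
    using rec_pred_less[OF total_rec_const assms(2)] unfolding rec_pred_def .
  ultimately show ?thesis
    by (rule total_rec_cong[OF total_rec_mult]) auto
qed

lemma total_rec_mod:
  assumes "total_rec k f" and "total_rec k g"
  shows "total_rec k (\<lambda>xs. f xs mod g xs)"
  by (rule total_rec_cong[where f = "\<lambda>xs. f xs - g xs * (f xs div g xs)"])
    (intro total_rec_diff total_rec_mult total_rec_div assms, simp add: minus_mult_div_eq_mod)

lemma total_rec_power:
  assumes "total_rec k f" and "total_rec k g"
  shows "total_rec k (\<lambda>xs. f xs ^ g xs)"
proof -
  have "total_rec (Suc 1) (\<lambda>xs. xs ! 1 ^ xs ! 0)"
    by (rule total_rec_prim_rec[where g = "\<lambda>xs. 1" and h = "\<lambda>zs. zs ! 2 * zs ! 0"])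
      (auto intro!: total_rec_mult total_rec_proj total_rec_const)
  then show ?thesis
    using total_rec_comp2[of "\<lambda>n b. b ^ n", OF _ assms(2,1)] by (simp add: numeral_2_eq_2)
qed

lemma rec_pred_bit:
  assumes "total_rec k f" and "total_rec k g"
  shows "rec_pred k (\<lambda>xs. bit (f xs) (g xs))"
proof -
  have "total_rec k (\<lambda>xs. f xs div 2 ^ g xs - 2 * (f xs div 2 ^ g xs div 2))"
    by (intro total_rec_diff total_rec_mult total_rec_div total_rec_power total_rec_const assms)
  then show ?thesis
    unfolding rec_pred_def
    by (rule total_rec_cong) (simp add: minus_mult_div_eq_mod bit_iff_odd of_bool_odd_eq_mod_2)
qed

lemma total_rec_Cons:
  assumes h: "total_rec (Suc k) h" and g: "total_rec k g"
  shows "total_rec k (\<lambda>xs. h (g xs # xs))"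
proof -
  have "total_rec k (\<lambda>xs. h (map (\<lambda>f. f xs) (g # map (\<lambda>i xs. xs ! i) [0..<k])))"
    by (rule total_rec_comp) (auto simp: h g intro: total_rec_proj)
  then show ?thesis
  proof (rule total_rec_cong)
    fix xs :: "nat list"
    assume "length xs = k"
    then show "h (map (\<lambda>f. f xs) (g # map (\<lambda>i xs. xs ! i) [0..<k])) = h (g xs # xs)"
      using map_nth[of xs] by (simp add: comp_def)
  qed
qed

lemma total_rec_sum:
  assumes f: "total_rec (Suc k) f" and g: "total_rec k g"
  shows "total_rec k (\<lambda>xs. \<Sum>j<g xs. f (j # xs))"
proof -
  have "total_rec (Suc (Suc k)) (\<lambda>zs. zs ! 0 + f (tl zs))"
    by (intro total_rec_add total_rec_proj total_rec_tl f) simp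
  then have "total_rec (Suc k) (\<lambda>ys. \<Sum>j<hd ys. f (j # tl ys))"
    by (rule total_rec_prim_rec[OF total_rec_zero]) simp_all
  then have "total_rec k (\<lambda>xs. (\<lambda>ys. \<Sum>j<hd ys. f (j # tl ys)) (g xs # xs))"
    by (rule total_rec_Cons[OF _ g])
  then show ?thesis
    by simp
qed

lemma rec_pred_all_less:
  assumes "rec_pred (Suc k) P" and "total_rec k g"
  shows "rec_pred k (\<lambda>xs. \<forall>j<g xs. P (j # xs))"
proof -
  have "total_rec k (\<lambda>xs. \<Sum>j<g xs. of_bool (\<not> P (j # xs)))"
    using total_rec_sum[OF rec_pred_not[OF assms(1), unfolded rec_pred_def] assms(2)] .
  then have "rec_pred k (\<lambda>xs. (\<Sum>j<g xs. of_bool (\<not> P (j # xs)) :: nat) = 0)"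
    by (rule rec_pred_eq[OF _ total_rec_const])
  then show ?thesis
    unfolding rec_pred_def by (rule total_rec_cong) auto
qed

lemma total_rec_prod_encode:
  assumes "total_rec k f" and "total_rec k g"
  shows "total_rec k (\<lambda>xs. prod_encode (f xs, g xs))"
  by (rule total_rec_cong[where f = "\<lambda>xs. (f xs + g xs) * Suc (f xs + g xs) div 2 + f xs"])
    (auto intro!: total_rec_add total_rec_div total_rec_mult total_rec_Suc total_rec_const assms
      simp: prod_encode_def triangle_def)

section \<open>Arithmetic on codes of bit strings\<close>

lemma nat_of_bl_bl_of_nat [simp]: "nat_of_bl (bl_of_nat n) = n"
  by (induction n rule: bl_of_nat.induct) simp_all

lemma bl_of_nat_nat_of_bl [simp]: "bl_of_nat (nat_of_bl l) = l"
  by (induction l) (simp_all add: nat_mult_distrib)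

lemma nat_of_bl_eq_iff [simp]: "nat_of_bl l = nat_of_bl l' \<longleftrightarrow> l = l'"
  by (metis bl_of_nat_nat_of_bl)

lemma nat_of_bl_eq_0_iff [simp]: "nat_of_bl l = 0 \<longleftrightarrow> l = []"
  by (cases l) auto

lemma nat_of_bl_append: "nat_of_bl (xs @ ys) = nat_of_bl xs + 2 ^ length xs * nat_of_bl ys"
  by (induction xs) auto

lemma length_le_nat_of_bl: "length l \<le> nat_of_bl l"
  by (induction l) auto

definition tl_code :: "nat \<Rightarrow> nat" where
  "tl_code y = (y - 1) div 2"

definition hd_code :: "nat \<Rightarrow> nat" where
  "hd_code y = (y - 1) mod 2"

definition drop_code :: "nat \<Rightarrow> nat \<Rightarrow> nat" where
  "drop_code k = tl_code ^^ k"

definition take_code :: "nat \<Rightarrow> nat \<Rightarrow> nat" where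
  "take_code k y = y - 2 ^ k * drop_code k y"

lemma tl_code_nat_of_bl [simp]: "tl_code (nat_of_bl l) = nat_of_bl (tl l)"
  by (cases l) (auto simp: tl_code_def)

lemma hd_code_nat_of_bl_Cons [simp]: "hd_code (nat_of_bl (b # l)) = of_bool b"
  by (simp add: hd_code_def)

lemma drop_code_nat_of_bl [simp]: "drop_code k (nat_of_bl l) = nat_of_bl (drop k l)"
  by (induction k) (simp_all add: drop_code_def drop_Suc tl_drop)

lemma take_code_nat_of_bl [simp]: "take_code k (nat_of_bl l) = nat_of_bl (take k l)"
proof -
  have "nat_of_bl l = nat_of_bl (take k l) + 2 ^ k * nat_of_bl (drop k l)"
    using nat_of_bl_append[of "take k l" "drop k l"] by (cases "k \<le> length l") auto
  then show ?thesis
    unfolding take_code_def drop_code_nat_of_bl by linarith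
qed

lemma total_rec_tl_code: "total_rec k f \<Longrightarrow> total_rec k (\<lambda>xs. tl_code (f xs))"
  unfolding tl_code_def by (intro total_rec_div total_rec_minus_1 total_rec_const)

lemma total_rec_hd_code: "total_rec k f \<Longrightarrow> total_rec k (\<lambda>xs. hd_code (f xs))"
  unfolding hd_code_def by (intro total_rec_mod total_rec_minus_1 total_rec_const)

lemma total_rec_drop_code:
  assumes "total_rec k f" and "total_rec k g"
  shows "total_rec k (\<lambda>xs. drop_code (f xs) (g xs))"
proof -
  have "total_rec (Suc 1) (\<lambda>xs. drop_code (xs ! 0) (xs ! 1))"
    by (rule total_rec_prim_rec[where g = "\<lambda>xs. xs ! 0" and h = "\<lambda>zs. tl_code (zs ! 0)"])
      (auto intro!: total_rec_tl_code total_rec_proj simp: drop_code_def)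
  then show ?thesis
    using total_rec_comp2[of drop_code, OF _ assms] by (simp add: numeral_2_eq_2)
qed

lemma total_rec_take_code:
  "total_rec k f \<Longrightarrow> total_rec k g \<Longrightarrow> total_rec k (\<lambda>xs. take_code (f xs) (g xs))"
  unfolding take_code_def
  by (intro total_rec_diff total_rec_mult total_rec_power total_rec_drop_code total_rec_const)

abbreviation doubled :: "bool list \<Rightarrow> bool list" where
  "doubled x \<equiv> concat (map (\<lambda>b. [b, b]) x)"

definition pair_head :: "bool list \<Rightarrow> bool list" where
  "pair_head x = doubled x @ [False, True]"

lemma pair_bl_eq_pair_head_append: "pair_bl x a = pair_head x @ a"
  by (simp add: pair_bl_def pair_head_def)

lemma length_doubled [simp]: "length (doubled x) = 2 * length x"
  by (induction x) auto

lemma drop_doubled_append: "m \<le> length x \<Longrightarrow> drop (2 * m) (doubled x @ r) = doubled (drop m x) @ r"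
proof (induction x arbitrary: m)
  case (Cons b x)
  then show ?case by (cases m) auto
qed simp

lemma pair_head_inject: "pair_head x = pair_head x' \<Longrightarrow> x = x'"
proof (induction x arbitrary: x')
  case Nil
  then show ?case by (cases x') (auto simp: pair_head_def)
next
  case (Cons b x)
  then show ?case by (cases x') (auto simp: pair_head_def)
qed

text \<open>
  In pair_bl x a = doubled x @ [False, True] @ a the separator starts at the first even position
  whose two bits differ.
\<close>

definition doubled_at :: "nat \<Rightarrow> nat \<Rightarrow> bool" where
  "doubled_at y m \<longleftrightarrow> drop_code (2 * m) y \<noteq> 0 \<and> tl_code (drop_code (2 * m) y) \<noteq> 0 \<and>
     hd_code (drop_code (2 * m) y) = hd_code (tl_code (drop_code (2 * m) y))"

definition split_pos :: "nat \<Rightarrow> nat" where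
  "split_pos y = (LEAST m. \<not> doubled_at y m)"

definition cond_head :: "nat \<Rightarrow> nat" where
  "cond_head y = take_code (2 * split_pos y + 2) y"

definition cond_table :: "nat \<Rightarrow> nat" where
  "cond_table y = drop_code (2 * split_pos y + 2) y"

lemma drop_pair_bl:
  "m \<le> length x \<Longrightarrow> drop (2 * m) (pair_bl x a) = doubled (drop m x) @ [False, True] @ a"
  by (simp add: pair_bl_def drop_doubled_append del: drop_append)

lemma doubled_at_pair_bl: "m < length x \<Longrightarrow> doubled_at (nat_of_bl (pair_bl x a)) m"
proof -
  assume m: "m < length x"
  then obtain c x' where "drop m x = c # x'"
    by (cases "drop m x") auto
  with m show ?thesis
    by (simp add: doubled_at_def drop_pair_bl del: nat_of_bl.simps)
qed

lemma not_doubled_at_pair_bl: "\<not> doubled_at (nat_of_bl (pair_bl x a)) (length x)"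
  by (simp add: doubled_at_def drop_pair_bl del: nat_of_bl.simps)

lemma split_pos_pair_bl [simp]: "split_pos (nat_of_bl (pair_bl x a)) = length x"
  unfolding split_pos_def
  by (rule Least_equality) (use doubled_at_pair_bl not_doubled_at_pair_bl not_le in blast)+

lemma cond_head_pair_bl [simp]: "cond_head (nat_of_bl (pair_bl x a)) = nat_of_bl (pair_head x)"
  unfolding cond_head_def split_pos_pair_bl
  by (simp add: pair_bl_eq_pair_head_append pair_head_def)

lemma cond_table_pair_bl [simp]: "cond_table (nat_of_bl (pair_bl x a)) = nat_of_bl a"
  unfolding cond_table_def split_pos_pair_bl
  by (simp add: pair_bl_eq_pair_head_append pair_head_def)

lemma rec_pred_doubled_at:
  "total_rec k f \<Longrightarrow> total_rec k g \<Longrightarrow> rec_pred k (\<lambda>xs. doubled_at (f xs) (g xs))"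
  unfolding doubled_at_def
  by (intro rec_pred_conj rec_pred_not rec_pred_eq total_rec_hd_code total_rec_tl_code
      total_rec_drop_code total_rec_mult total_rec_const)

lemma not_doubled_at_self: "\<not> doubled_at y y"
proof -
  have "length (bl_of_nat y) \<le> 2 * y"
    using length_le_nat_of_bl[of "bl_of_nat y"] by simp
  then have "drop_code (2 * y) y = 0"
    using drop_code_nat_of_bl[of "2 * y" "bl_of_nat y"] by simp
  then show ?thesis
    by (simp add: doubled_at_def)
qed

lemma total_rec_split_pos: "total_rec k f \<Longrightarrow> total_rec k (\<lambda>xs. split_pos (f xs))"
proof -
  define P where "P zs \<longleftrightarrow> \<not> doubled_at (zs ! 1) (zs ! 0)" for zs
  have "rec_pred (Suc 1) P"
    unfolding P_def by (intro rec_pred_not rec_pred_doubled_at total_rec_proj) auto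
  moreover have "\<exists>m. P (m # xs)" for xs
    using not_doubled_at_self by (auto simp: P_def)
  ultimately have "total_rec 1 (\<lambda>xs. LEAST m. P (m # xs))"
    by (rule total_rec_Least)
  then show "total_rec k f \<Longrightarrow> total_rec k (\<lambda>xs. split_pos (f xs))"
    using total_rec_comp1[of split_pos] by (simp add: split_pos_def P_def)
qed

lemma total_rec_cond_head: "total_rec k f \<Longrightarrow> total_rec k (\<lambda>xs. cond_head (f xs))"
  unfolding cond_head_def
  by (intro total_rec_take_code total_rec_add total_rec_mult total_rec_split_pos total_rec_const)

lemma total_rec_cond_table: "total_rec k f \<Longrightarrow> total_rec k (\<lambda>xs. cond_table (f xs))"
  unfolding cond_table_def
  by (intro total_rec_drop_code total_rec_add total_rec_mult total_rec_split_pos total_rec_const)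

section \<open>A prefix-free machine reading its program off a table\<close>

definition find_least :: "(nat \<Rightarrow> bool) \<Rightarrow> nat option" where
  "find_least P = (if \<exists>i. P i then Some (LEAST i. P i) else None)"

lemma find_least_eq_Some_iff: "find_least P = Some v \<longleftrightarrow> P v \<and> (\<forall>m<v. \<not> P m)"
  unfolding find_least_def
  by (metis (mono_tags, lifting) LeastI Least_equality not_less_Least leI option.inject option.simps(3))

lemma comp2_find_least:
  assumes "rec_pred 3 (\<lambda>xs. P (xs ! 0) (xs ! 1) (xs ! 2))"
  shows "comp2 (\<lambda>a b. find_least (\<lambda>i. P i a b))"
proof -
  obtain r where r: "\<forall>xs. length xs = 3 \<longrightarrow> reval r xs (of_bool (\<not> P (xs ! 0) (xs ! 1) (xs ! 2)))"
    using rec_pred_not[OF assms] unfolding rec_pred_def total_rec_def by auto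
  have "reval (Mu r) [a, b] v \<longleftrightarrow> find_least (\<lambda>i. P i a b) = Some v" for a b v
    using reval_Mu_iff[of 2 r "\<lambda>xs. of_bool (\<not> P (xs ! 0) (xs ! 1) (xs ! 2))" "[a, b]" v] r
    by (simp add: find_least_eq_Some_iff)
  then show ?thesis
    unfolding comp2_def by blast
qed

text \<open>
  The table in the condition pair_bl x \<alpha> is \<alpha> read as a number, whose bits are indexed by
  table_key (code of pair_head x) (code of p) t: bit t = 0 says that p is a complete walk from x,
  bit t = i + 1 that this walk ends at literal i. Rejecting every program with a proper prefix
  marked in the table makes the machine prefix-free whatever the condition is.
\<close>

definition table_key :: "nat \<Rightarrow> nat \<Rightarrow> nat \<Rightarrow> nat" where
  "table_key d a t = prod_encode (d, prod_encode (a, t))"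

definition in_table :: "nat \<Rightarrow> nat \<Rightarrow> nat \<Rightarrow> bool" where
  "in_table y a t \<longleftrightarrow> bit (cond_table y) (table_key (cond_head y) a t)"

definition accepts :: "nat \<Rightarrow> nat \<Rightarrow> bool" where
  "accepts y a \<longleftrightarrow> in_table y a 0 \<and> (\<forall>j<a. drop_code j a \<noteq> 0 \<longrightarrow> \<not> in_table y (take_code j a) 0)"

definition table_machine :: machine where
  "table_machine p y = map_option bl_of_nat
     (find_least (\<lambda>i. accepts (nat_of_bl y) (nat_of_bl p) \<and> in_table (nat_of_bl y) (nat_of_bl p) (Suc i)))"

lemma rec_pred_in_table:
  "total_rec k f \<Longrightarrow> total_rec k g \<Longrightarrow> total_rec k h \<Longrightarrow> rec_pred k (\<lambda>xs. in_table (f xs) (g xs) (h xs))"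
  unfolding in_table_def table_key_def
  by (intro rec_pred_bit total_rec_cond_table total_rec_prod_encode total_rec_cond_head)

lemma rec_pred_accepts: "total_rec k f \<Longrightarrow> total_rec k g \<Longrightarrow> rec_pred k (\<lambda>xs. accepts (f xs) (g xs))"
proof -
  assume f: "total_rec k f" and g: "total_rec k g"
  define P where "P zs \<longleftrightarrow> drop_code (zs ! 0) (g (tl zs)) \<noteq> 0 \<longrightarrow>
      \<not> in_table (f (tl zs)) (take_code (zs ! 0) (g (tl zs))) 0" for zs
  have "rec_pred (Suc k) P"
    unfolding P_def
    by (intro rec_pred_imp rec_pred_not rec_pred_eq rec_pred_in_table total_rec_drop_code
        total_rec_take_code total_rec_tl total_rec_proj total_rec_const f g) simp_all
  then have "rec_pred k (\<lambda>xs. \<forall>j<g xs. P (j # xs))"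
    using g by (rule rec_pred_all_less)
  then show ?thesis
    unfolding accepts_def P_def by (intro rec_pred_conj rec_pred_in_table f g total_rec_const) simp
qed

lemma table_machine_computable: "computable_machine table_machine"
proof -
  have "rec_pred 3 (\<lambda>xs. accepts (xs ! 2) (xs ! 1) \<and> in_table (xs ! 2) (xs ! 1) (Suc (xs ! 0)))"
    by (intro rec_pred_conj rec_pred_accepts rec_pred_in_table total_rec_Suc total_rec_proj) simp_all
  then have "comp2 (\<lambda>a b. find_least (\<lambda>i. accepts b a \<and> in_table b a (Suc i)))"
    by (rule comp2_find_least)
  then show ?thesis
    unfolding computable_machine_def table_machine_def by (simp add: option.map_comp comp_def option.map_ident)
qed

lemma table_machine_accepts: "table_machine p y \<noteq> None \<Longrightarrow> accepts (nat_of_bl y) (nat_of_bl p)"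
  unfolding table_machine_def find_least_def by (auto split: if_splits)

lemma table_machine_prefix_free: "prefix_free_machine table_machine"
  unfolding prefix_free_machine_def
proof (intro conjI table_machine_computable allI impI)
  fix y p q
  assume p: "table_machine p y \<noteq> None" and q: "table_machine q y \<noteq> None" and "prefix p q"
  then obtain r where q_eq: "q = p @ r"
    by (auto simp: prefix_def)
  show "p = q"
  proof (rule ccontr)
    assume "p \<noteq> q"
    with q_eq have "length p < length q"
      by simp
    then have "length p < nat_of_bl q" and "drop_code (length p) (nat_of_bl q) \<noteq> 0"
      using length_le_nat_of_bl[of q] by simp_all
    moreover have "take_code (length p) (nat_of_bl q) = nat_of_bl p"
      using q_eq by simp
    ultimately have "\<not> in_table (nat_of_bl y) (nat_of_bl p) 0"
      using table_machine_accepts[OF q] unfolding accepts_def by metis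
    then show False
      using table_machine_accepts[OF p] unfolding accepts_def by blast
  qed
qed

section \<open>The Karchmer--Wigderson walk\<close>

text \<open>
  The flag v is the value of the formula at x: the holder of a true input resolves Or gates
  itself and reads the branches at And gates from p, and dually for a false input.
\<close>

fun kw_walk :: "bool \<Rightarrow> form \<Rightarrow> bool list \<Rightarrow> bool list \<Rightarrow> nat option" where
  "kw_walk v (Lit i b) x p = (if p = [] then Some i else None)"
| "kw_walk v (Or a c) x p =
    (if v then (if feval a x then kw_walk v a x p else kw_walk v c x p)
     else (case p of [] \<Rightarrow> None | d # p' \<Rightarrow> if d then kw_walk v a x p' else kw_walk v c x p'))"
| "kw_walk v (And a c) x p =
    (if v then (case p of [] \<Rightarrow> None | d # p' \<Rightarrow> if d then kw_walk v a x p' else kw_walk v c x p')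
     else (if feval a x then kw_walk v c x p else kw_walk v a x p))"

lemma kw_walk_prefix_free: "kw_walk v \<phi> x p \<noteq> None \<Longrightarrow> kw_walk v \<phi> x (p @ r) \<noteq> None \<Longrightarrow> r = []"
  by (induction \<phi> arbitrary: p) (auto split: if_splits list.splits)

lemma kw_walk_length: "kw_walk v \<phi> x p \<noteq> None \<Longrightarrow> length p \<le> fdepth \<phi>"
  by (induction \<phi> arbitrary: p) (fastforce split: if_splits list.splits)+

lemma kw_walks_meet:
  "feval \<phi> x \<Longrightarrow> \<not> feval \<phi> y \<Longrightarrow> \<exists>p q i. kw_walk True \<phi> x p = Some i \<and> kw_walk False \<phi> y q = Some i \<and>
     length p + length q \<le> fdepth \<phi> \<and> i \<in> fvars \<phi> \<and> x ! (i - 1) \<noteq> y ! (i - 1)"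
proof (induction \<phi>)
  case (Lit i b)
  then show ?case
    by (intro exI[of _ "[]"] exI[of _ i]) (auto split: if_splits)
next
  case (And a c)
  show ?case
  proof (cases "feval a y")
    case False
    with And obtain p q i where "kw_walk True a x p = Some i" "kw_walk False a y q = Some i"
      "length p + length q \<le> fdepth a" "i \<in> fvars a" "x ! (i - 1) \<noteq> y ! (i - 1)"
      by auto
    with False show ?thesis
      by (intro exI[of _ "True # p"] exI[of _ q] exI[of _ i]) auto
  next
    case True
    with And obtain p q i where "kw_walk True c x p = Some i" "kw_walk False c y q = Some i"
      "length p + length q \<le> fdepth c" "i \<in> fvars c" "x ! (i - 1) \<noteq> y ! (i - 1)"
      by auto
    with True show ?thesis
      by (intro exI[of _ "False # p"] exI[of _ q] exI[of _ i]) auto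
  qed
next
  case (Or a c)
  show ?case
  proof (cases "feval a x")
    case True
    with Or obtain p q i where "kw_walk True a x p = Some i" "kw_walk False a y q = Some i"
      "length p + length q \<le> fdepth a" "i \<in> fvars a" "x ! (i - 1) \<noteq> y ! (i - 1)"
      by auto
    with True show ?thesis
      by (intro exI[of _ p] exI[of _ "True # q"] exI[of _ i]) auto
  next
    case False
    with Or obtain p q i where "kw_walk True c x p = Some i" "kw_walk False c y q = Some i"
      "length p + length q \<le> fdepth c" "i \<in> fvars c" "x ! (i - 1) \<noteq> y ! (i - 1)"
      by auto
    with False Or.prems show ?thesis
      by (intro exI[of _ p] exI[of _ "False # q"] exI[of _ i]) auto
  qed
qed

definition walk :: "form \<Rightarrow> bool list \<Rightarrow> bool list \<Rightarrow> nat option" where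
  "walk \<phi> x p = kw_walk (feval \<phi> x) \<phi> x p"

definition walk_domain :: "form \<Rightarrow> nat \<Rightarrow> (bool list \<times> bool list) set" where
  "walk_domain \<phi> n = {(x, p). length x = n \<and> walk \<phi> x p \<noteq> None}"

definition walk_keys :: "form \<Rightarrow> nat \<Rightarrow> nat set" where
  "walk_keys \<phi> n =
     (\<lambda>(x, p). table_key (nat_of_bl (pair_head x)) (nat_of_bl p) 0) ` walk_domain \<phi> n \<union>
     (\<lambda>(x, p). table_key (nat_of_bl (pair_head x)) (nat_of_bl p) (Suc (the (walk \<phi> x p)))) ` walk_domain \<phi> n"

lemma finite_walk_domain: "finite (walk_domain \<phi> n)"
proof (rule finite_subset)
  show "walk_domain \<phi> n \<subseteq> {x. set x \<subseteq> UNIV \<and> length x = n} \<times> {p. set p \<subseteq> UNIV \<and> length p \<le> fdepth \<phi>}"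
    unfolding walk_domain_def walk_def using kw_walk_length by blast
  show "finite ({x :: bool list. set x \<subseteq> UNIV \<and> length x = n} \<times>
      {p :: bool list. set p \<subseteq> UNIV \<and> length p \<le> fdepth \<phi>})"
    by (intro finite_cartesian_product finite_lists_length_eq finite_lists_length_le) auto
qed

lemma ex_nat_bits_eq: "finite K \<Longrightarrow> \<exists>A :: nat. \<forall>k. bit A k \<longleftrightarrow> k \<in> K"
proof (induction K rule: finite_induct)
  case (insert k K)
  then obtain A :: nat where "\<forall>j. bit A j \<longleftrightarrow> j \<in> K"
    by blast
  then have "\<forall>j. bit (or A (2 ^ k)) j \<longleftrightarrow> j \<in> insert k K"
    by (auto simp: bit_or_iff bit_exp_iff)
  then show ?case
    by blast
qed (intro exI[of _ 0], simp)

lemma table_key_eq_iff: "table_key d a t = table_key d' a' t' \<longleftrightarrow> d = d' \<and> a = a' \<and> t = t'"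
  by (auto simp: table_key_def)

lemma table_key_mem_walk_keys_iff:
  assumes "length x = n"
  shows "table_key (nat_of_bl (pair_head x)) (nat_of_bl q) t \<in> walk_keys \<phi> n \<longleftrightarrow>
    (case t of 0 \<Rightarrow> walk \<phi> x q \<noteq> None | Suc i \<Rightarrow> walk \<phi> x q = Some i)"
proof -
  have "table_key (nat_of_bl (pair_head x)) (nat_of_bl q) t \<in> walk_keys \<phi> n \<longleftrightarrow>
      (x, q) \<in> walk_domain \<phi> n \<and> (t = 0 \<or> t = Suc (the (walk \<phi> x q)))"
    unfolding walk_keys_def by (auto simp: table_key_eq_iff dest: pair_head_inject)
  then show ?thesis
    using assms by (cases t) (auto simp: walk_domain_def)
qed

lemma in_walk_table_iff:
  assumes "\<forall>k. bit A k \<longleftrightarrow> k \<in> walk_keys \<phi> n" and "length x = n"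
  shows "in_table (nat_of_bl (pair_bl x (bl_of_nat A))) (nat_of_bl q) t \<longleftrightarrow>
    (case t of 0 \<Rightarrow> walk \<phi> x q \<noteq> None | Suc i \<Rightarrow> walk \<phi> x q = Some i)"
  using assms by (simp add: in_table_def table_key_mem_walk_keys_iff)

lemma table_machine_walk:
  assumes A: "\<forall>k. bit A k \<longleftrightarrow> k \<in> walk_keys \<phi> n" and x: "length x = n"
    and w: "walk \<phi> x p = Some i"
  shows "table_machine p (pair_bl x (bl_of_nat A)) = Some (bl_of_nat i)"
proof -
  note table = in_walk_table_iff[OF A x]
  let ?y = "nat_of_bl (pair_bl x (bl_of_nat A))"
  have "\<not> in_table ?y (take_code j (nat_of_bl p)) 0" if "drop_code j (nat_of_bl p) \<noteq> 0" for j
  proof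
    assume "in_table ?y (take_code j (nat_of_bl p)) 0"
    then have "walk \<phi> x (take j p) \<noteq> None"
      by (simp add: table)
    moreover have "walk \<phi> x (take j p @ drop j p) \<noteq> None"
      using w by simp
    ultimately have "drop j p = []"
      unfolding walk_def by (rule kw_walk_prefix_free)
    with that show False
      by simp
  qed
  moreover have "in_table ?y (nat_of_bl p) 0"
    using w by (simp add: table)
  ultimately have "accepts ?y (nat_of_bl p)"
    unfolding accepts_def by blast
  moreover have "in_table ?y (nat_of_bl p) (Suc i') \<longleftrightarrow> i' = i" for i'
    using w by (auto simp: table)
  ultimately show ?thesis
    unfolding table_machine_def by (simp add: find_least_eq_Some_iff)
qed

lemma finite_walk_keys: "finite (walk_keys \<phi> n)"
  by (simp add: walk_keys_def finite_walk_domain)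

lemma KC_le_length: "U p b = Some a \<Longrightarrow> KC U a b \<le> length p"
  unfolding KC_def by (rule cInf_lower) auto

lemma KI_le:
  assumes "\<And>x y. length x = n \<Longrightarrow> length y = n \<Longrightarrow> f x \<Longrightarrow> \<not> f y \<Longrightarrow>
     \<exists>i. 1 \<le> i \<and> i \<le> n \<and> x ! (i - 1) \<noteq> y ! (i - 1) \<and>
       KC U (bl_of_nat i) (pair_bl x \<alpha>) + KC U (bl_of_nat i) (pair_bl y \<alpha>) \<le> B"
  shows "KI U n f \<le> B"
proof -
  let ?pairs = "{(x, y). length x = n \<and> length y = n \<and> f x \<noteq> f y}"
  let ?cost = "\<lambda>\<alpha> xy. INF i \<in> {i. 1 \<le> i \<and> i \<le> n \<and> fst xy ! (i - 1) \<noteq> snd xy ! (i - 1)}.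
     KC U (bl_of_nat i) (pair_bl (fst xy) \<alpha>) + KC U (bl_of_nat i) (pair_bl (snd xy) \<alpha>)"
  have cost: "?cost \<alpha> xy \<le> B" if pair: "xy \<in> ?pairs" for xy
  proof -
    obtain x y where xy: "xy = (x, y)" "length x = n" "length y = n" "f x \<noteq> f y"
      using pair by auto
    then obtain i where "1 \<le> i" "i \<le> n" "x ! (i - 1) \<noteq> y ! (i - 1)"
      "KC U (bl_of_nat i) (pair_bl x \<alpha>) + KC U (bl_of_nat i) (pair_bl y \<alpha>) \<le> B"
      using assms[of x y] assms[of y x] by (cases "f x") (auto simp: add.commute)
    then show ?thesis
      unfolding xy(1) by (rule_tac cINF_lower2[where x = i]) auto
  qed
  have "KI U n f \<le> (SUP xy \<in> ?pairs. ?cost \<alpha> xy)"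
    unfolding KI_def by (rule cINF_lower) (auto intro: bdd_belowI[of _ 0])
  also have "\<dots> \<le> B"
  proof (cases "?pairs = {}")
    case False
    then show ?thesis
      using cost by (rule cSUP_least)
  next
    case True
    then show ?thesis
      by (simp only: True) simp
  qed
  finally show ?thesis .
qed

lemma KI_le_fdepth:
  assumes \<sigma>: "\<forall>p y. U (\<sigma> @ p) y = table_machine p y" and \<phi>: "computes n \<phi> f"
  shows "KI U n f \<le> fdepth \<phi> + 2 * length \<sigma>"
proof -
  obtain A :: nat where A: "\<forall>k. bit A k \<longleftrightarrow> k \<in> walk_keys \<phi> n"
    using ex_nat_bits_eq[OF finite_walk_keys] by blast
  have KC_walk: "KC U (bl_of_nat i) (pair_bl x (bl_of_nat A)) \<le> length \<sigma> + length p"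
    if "length x = n" "walk \<phi> x p = Some i" for x p i
    using KC_le_length[of U "\<sigma> @ p"] table_machine_walk[OF A that] \<sigma> by simp
  show ?thesis
  proof (rule KI_le)
    fix x y
    assume x: "length x = n" "f x" and y: "length y = n" "\<not> f y"
    with \<phi> have "feval \<phi> x" "\<not> feval \<phi> y"
      unfolding computes_def by auto
    then obtain p q i where walks: "walk \<phi> x p = Some i" "walk \<phi> y q = Some i"
      and len: "length p + length q \<le> fdepth \<phi>" and i: "i \<in> fvars \<phi>" "x ! (i - 1) \<noteq> y ! (i - 1)"
      unfolding walk_def using kw_walks_meet by fastforce
    have "1 \<le> i" "i \<le> n"
      using \<phi> i(1) unfolding computes_def by auto
    moreover have "KC U (bl_of_nat i) (pair_bl x (bl_of_nat A)) + KC U (bl_of_nat i) (pair_bl y (bl_of_nat A))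
        \<le> fdepth \<phi> + 2 * length \<sigma>"
      using KC_walk[OF x(1) walks(1)] KC_walk[OF y(1) walks(2)] len by linarith
    ultimately show "\<exists>i. 1 \<le> i \<and> i \<le> n \<and> x ! (i - 1) \<noteq> y ! (i - 1) \<and>
        KC U (bl_of_nat i) (pair_bl x (bl_of_nat A)) + KC U (bl_of_nat i) (pair_bl y (bl_of_nat A))
          \<le> fdepth \<phi> + 2 * length \<sigma>"
      using i(2) by blast
  qed
qed

section \<open>Existence of formulas\<close>

fun Ands :: "form list \<Rightarrow> form" where
  "Ands [] = Lit 1 True"
| "Ands [a] = a"
| "Ands (a # c # l) = And a (Ands (c # l))"

fun Ors :: "form list \<Rightarrow> form" where
  "Ors [] = Lit 1 True"
| "Ors [a] = a"
| "Ors (a # c # l) = Or a (Ors (c # l))"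

lemma feval_Ands: "l \<noteq> [] \<Longrightarrow> feval (Ands l) z \<longleftrightarrow> (\<forall>a\<in>set l. feval a z)"
  by (induction l rule: Ands.induct) auto

lemma fvars_Ands: "l \<noteq> [] \<Longrightarrow> fvars (Ands l) = (\<Union>a\<in>set l. fvars a)"
  by (induction l rule: Ands.induct) auto

lemma feval_Ors: "l \<noteq> [] \<Longrightarrow> feval (Ors l) z \<longleftrightarrow> (\<exists>a\<in>set l. feval a z)"
  by (induction l rule: Ors.induct) auto

lemma fvars_Ors: "l \<noteq> [] \<Longrightarrow> fvars (Ors l) = (\<Union>a\<in>set l. fvars a)"
  by (induction l rule: Ors.induct) auto

definition minterm :: "bool list \<Rightarrow> form" where
  "minterm x = Ands (map (\<lambda>i. Lit (Suc i) (x ! i)) [0..<length x])"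

lemma feval_minterm:
  assumes "x \<noteq> []" and "length z = length x"
  shows "feval (minterm x) z \<longleftrightarrow> z = x"
proof -
  have "feval (minterm x) z \<longleftrightarrow> (\<forall>i<length x. z ! i = x ! i)"
    unfolding minterm_def using assms(1) by (subst feval_Ands) auto
  also have "\<dots> \<longleftrightarrow> z = x"
    using assms(2) by (auto simp: list_eq_iff_nth_eq)
  finally show ?thesis .
qed

lemma fvars_minterm: "x \<noteq> [] \<Longrightarrow> fvars (minterm x) \<subseteq> {1..length x}"
  unfolding minterm_def by (subst fvars_Ands) auto

lemma ex_computes:
  assumes "length x = n" and "length y = n" and "f x \<noteq> f y"
  shows "\<exists>\<phi>. computes n \<phi> f"
proof -
  have "n \<noteq> 0"
    using assms by (metis length_0_conv)
  have "finite {z. length z = n \<and> f z}"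
  proof (rule finite_subset)
    show "{z. length z = n \<and> f z} \<subseteq> {z. set z \<subseteq> (UNIV :: bool set) \<and> length z = n}"
      by blast
    show "finite {z. set z \<subseteq> (UNIV :: bool set) \<and> length z = n}"
      by (rule finite_lists_length_eq) simp
  qed
  then obtain L where L: "set L = {z. length z = n \<and> f z}"
    using finite_list by blast
  have "x \<in> set L \<or> y \<in> set L"
    unfolding L using assms by auto
  then have "L \<noteq> []"
    by auto
  have minterms: "z \<noteq> [] \<and> length z = n" if "z \<in> set L" for z
    using L that \<open>n \<noteq> 0\<close> by auto
  have "fvars (Ors (map minterm L)) = (\<Union>w\<in>set L. fvars (minterm w))"
    using \<open>L \<noteq> []\<close> by (simp add: fvars_Ors)
  also have "\<dots> \<subseteq> {1..n}"
  proof (rule UN_least)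
    fix w
    assume "w \<in> set L"
    then show "fvars (minterm w) \<subseteq> {1..n}"
      using fvars_minterm[of w] minterms by simp
  qed
  finally have "fvars (Ors (map minterm L)) \<subseteq> {1..n}" .
  moreover have "feval (Ors (map minterm L)) z = f z" if "length z = n" for z
  proof -
    have "feval (Ors (map minterm L)) z \<longleftrightarrow> (\<exists>w\<in>set L. feval (minterm w) z)"
      using \<open>L \<noteq> []\<close> by (simp add: feval_Ors)
    also have "\<dots> \<longleftrightarrow> z \<in> set L"
      using minterms feval_minterm that by (metis (no_types))
    finally show ?thesis
      using L that by simp
  qed
  ultimately show ?thesis
    unfolding computes_def by blast
qed

lemma depth_attained:
  assumes "computes n \<phi> f"
  obtains \<psi> where "computes n \<psi> f" and "fdepth \<psi> = depth n f"
proof -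
  have "depth n f \<in> fdepth ` {\<psi>. computes n \<psi> f}"
    unfolding depth_def by (rule Inf_nat_def1) (use assms in blast)
  then obtain \<psi> where "computes n \<psi> f" and "depth n f = fdepth \<psi>"
    by auto
  with that show ?thesis
    by simp
qed

lemma KI_le_depth:
  assumes \<sigma>: "\<forall>p y. U (\<sigma> @ p) y = table_machine p y"
  shows "KI U n f \<le> depth n f + 2 * length \<sigma>"
proof (cases "\<exists>\<phi>. computes n \<phi> f")
  case True
  then obtain \<phi> where \<phi>: "computes n \<phi> f" and "fdepth \<phi> = depth n f"
    using depth_attained by blast
  with KI_le_fdepth[OF \<sigma> \<phi>] show ?thesis
    by simp
next
  case False
  have "KI U n f \<le> 0"
  proof (rule KI_le)
    fix x y
    assume "length x = n" "length y = n" "f x" "\<not> f y"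
    with False ex_computes[of x n y f] show "\<exists>i. 1 \<le> i \<and> i \<le> n \<and> x ! (i - 1) \<noteq> y ! (i - 1) \<and>
        KC U (bl_of_nat i) (pair_bl x []) + KC U (bl_of_nat i) (pair_bl y []) \<le> 0"
      by simp
  qed
  then show ?thesis
    by simp
qed

theorem mainTheorem5:
  fixes U :: machine
  assumes "universal_pf U"
  shows "\<exists>c::nat. \<forall>(n::nat) (f::bool list \<Rightarrow> bool). KI U n f \<le> depth n f + c"
proof -
  obtain \<sigma> where "\<forall>p y. U (\<sigma> @ p) y = table_machine p y"
    using assms table_machine_prefix_free unfolding universal_pf_def by blast
  then show ?thesis
    using KI_le_depth by blast
qed

end
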